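(* Let $n\ge 2$ and let $g(q)=q^{n}+q^{n-1}a_{n-1}+\dots+qa_1+a_0$ with $a_0,\dots,a_{n-1}\in\mathbb{H}$ and $a_1,\dots,a_{n-1}\neq 0$. Then every zero $q\in\mathbb{H}$ of $g$ satisfies $$|q|\le \max\Big\{\Big|\frac{a_0}{a_1}\Big|,\ 2\Big|\frac{a_1}{a_2}\Big|,\ 2\Big|\frac{a_2}{a_3}\Big|,\ \dots,\ 2\Big|\frac{a_{n-2}}{a_{n-1}}\Big|,\ 2|a_{n-1}|\Big\}.$$
   Context: $\mathbb{H}$ denotes the real quaternions with norm $|q|=\sqrt{q\bar q}$ (Euclidean norm on $\mathbb{R}^4$); $|a/b|$ means $|a|/|b|$. The polynomial $g$ is evaluated at $q\in\mathbb{H}$ by direct substitution, $g(q)=q^n+q^{n-1}a_{n-1}+\dots+qa_1+a_0$ (coefficients to the right of the powers); a zero of $g$ is a $q\in\mathbb{H}$ with $g(q)=0$. *)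

theory Defs
  imports Complex_Main
begin

text \<open>Real quaternions q = Re + Im1 i + Im2 j + Im3 k, with i^2=j^2=k^2=ijk=-1.\<close>

datatype quat = Quat (Re: real) (Im1: real) (Im2: real) (Im3: real)

lemma quat_eqI: "Re a = Re b \<Longrightarrow> Im1 a = Im1 b \<Longrightarrow> Im2 a = Im2 b \<Longrightarrow> Im3 a = Im3 b \<Longrightarrow> a = b"
  by (cases a; cases b) auto

instantiation quat :: ring_1
begin
definition "0 = Quat 0 0 0 0"
definition "1 = Quat 1 0 0 0"
definition "a + b = Quat (Re a + Re b) (Im1 a + Im1 b) (Im2 a + Im2 b) (Im3 a + Im3 b)"
definition "a - b = Quat (Re a - Re b) (Im1 a - Im1 b) (Im2 a - Im2 b) (Im3 a - Im3 b)"
definition "- a = Quat (- Re a) (- Im1 a) (- Im2 a) (- Im3 a)"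
definition "a * b = Quat
   (Re a * Re b - Im1 a * Im1 b - Im2 a * Im2 b - Im3 a * Im3 b)
   (Re a * Im1 b + Im1 a * Re b + Im2 a * Im3 b - Im3 a * Im2 b)
   (Re a * Im2 b - Im1 a * Im3 b + Im2 a * Re b + Im3 a * Im1 b)
   (Re a * Im3 b + Im1 a * Im2 b - Im2 a * Im1 b + Im3 a * Re b)"
instance
  by standard (auto intro!: quat_eqI simp: zero_quat_def one_quat_def plus_quat_def
      minus_quat_def uminus_quat_def times_quat_def algebra_simps)
end

definition qnorm :: "quat \<Rightarrow> real" where
  "qnorm q = sqrt ((Re q)\<^sup>2 + (Im1 q)\<^sup>2 + (Im2 q)\<^sup>2 + (Im3 q)\<^sup>2)"

definition qpoly_eval :: "nat \<Rightarrow> (nat \<Rightarrow> quat) \<Rightarrow> quat \<Rightarrow> quat" where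
  "qpoly_eval n a q = q ^ n + (\<Sum>k<n. q ^ k * a k)"

end

theory Submission
  imports Defs "HOL-Analysis.Product_Vector"
begin

text \<open>If \<open>|q|\<close> exceeded the maximum \<open>M\<close>, then with \<open>c\<^sub>k = |q|\<^sup>k |a\<^sub>k|\<close> for \<open>k < n\<close> and
  \<open>c\<^sub>n = |q|\<^sup>n\<close> the hypothesis \<open>|q| > M\<close> says \<open>c\<^sub>0 < c\<^sub>1\<close> and \<open>2 c\<^sub>k < c\<^sub>k\<^sub>+\<^sub>1\<close> for \<open>1 \<le> k < n\<close>.
  Such a sequence grows so fast that \<open>c\<^sub>0 + \<dots> + c\<^sub>n\<^sub>-\<^sub>1 < c\<^sub>n\<close>, i.e. the leading term
  \<open>q\<^sup>n\<close> strictly dominates the rest of \<open>g(q)\<close> in norm, since the quaternion norm is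
  multiplicative and subadditive. Hence \<open>g(q) \<noteq> 0\<close>.\<close>

definition quat_coords :: "quat \<Rightarrow> (real \<times> real) \<times> (real \<times> real)" where
  "quat_coords q = ((Re q, Im1 q), (Im2 q, Im3 q))"

lemma qnorm_eq_norm_coords: "qnorm q = norm (quat_coords q)"
  by (simp add: qnorm_def quat_coords_def norm_prod_def add.assoc)

lemma quat_coords_add: "quat_coords (a + b) = quat_coords a + quat_coords b"
  by (simp add: quat_coords_def plus_quat_def)

lemma quat_coords_eq_0_iff: "quat_coords q = 0 \<longleftrightarrow> q = 0"
  by (cases q) (simp add: quat_coords_def zero_quat_def zero_prod_def)

lemma qnorm_nonneg: "qnorm q \<ge> 0"
  by (simp add: qnorm_eq_norm_coords)

lemma qnorm_pos_iff: "qnorm q > 0 \<longleftrightarrow> q \<noteq> 0"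
  by (simp add: qnorm_eq_norm_coords quat_coords_eq_0_iff)

lemma qnorm_add: "qnorm (a + b) \<le> qnorm a + qnorm b"
  by (simp add: qnorm_eq_norm_coords quat_coords_add norm_triangle_ineq)

lemma qnorm_uminus: "qnorm (- a) = qnorm a"
  by (simp add: qnorm_def uminus_quat_def)

lemma qnorm_sum: "qnorm (sum f A) \<le> (\<Sum>x\<in>A. qnorm (f x))"
proof (induction A rule: infinite_finite_induct)
  case (insert x F)
  then show ?case using qnorm_add[of "f x" "sum f F"] by simp
qed (simp_all add: qnorm_def zero_quat_def)

lemma qnorm_mult: "qnorm (a * b) = qnorm a * qnorm b"
proof -
  have sq: "(qnorm x)\<^sup>2 = (Re x)\<^sup>2 + (Im1 x)\<^sup>2 + (Im2 x)\<^sup>2 + (Im3 x)\<^sup>2" for x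
    by (simp add: qnorm_def)
  have "(qnorm (a * b))\<^sup>2 = (qnorm a * qnorm b)\<^sup>2"
    unfolding power_mult_distrib sq by (simp add: times_quat_def power2_eq_square algebra_simps)
  then show ?thesis
    using qnorm_nonneg by (metis mult_nonneg_nonneg power2_eq_imp_eq)
qed

lemma qnorm_one: "qnorm 1 = 1"
  by (simp add: qnorm_def one_quat_def)

lemma qnorm_power: "qnorm (q ^ k) = qnorm q ^ k"
  by (induction k) (simp_all add: qnorm_mult qnorm_one)

lemma qnorm_power_le_of_qpoly_eval_eq_0:
  assumes "qpoly_eval n a q = 0"
  shows "qnorm q ^ n \<le> (\<Sum>k<n. qnorm q ^ k * qnorm (a k))"
proof -
  have "q ^ n = - (\<Sum>k<n. q ^ k * a k)"
    using assms by (simp add: qpoly_eval_def eq_neg_iff_add_eq_0)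
  then have "qnorm q ^ n = qnorm (\<Sum>k<n. q ^ k * a k)"
    by (simp add: qnorm_power [symmetric] qnorm_uminus)
  also have "\<dots> \<le> (\<Sum>k<n. qnorm (q ^ k * a k))"
    by (rule qnorm_sum)
  finally show ?thesis
    by (simp add: qnorm_mult qnorm_power)
qed

lemma sum_lessThan_less_of_doubling:
  fixes c :: "nat \<Rightarrow> 'a :: linordered_semidom"
  assumes "c 0 < c 1" and "\<And>k. 1 \<le> k \<Longrightarrow> k < n \<Longrightarrow> 2 * c k < c (Suc k)" and "n \<ge> 1"
  shows "sum c {..<n} < c n"
  using assms(2,3)
proof (induction n)
  case (Suc m)
  show ?case
  proof (cases "m = 0")
    case True
    then show ?thesis using assms(1) by simp
  next
    case False
    then have "sum c {..<m} < c m"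
      using Suc by auto
    then have "sum c {..<m} + c m < 2 * c m"
      by (simp add: mult_2)
    also have "\<dots> < c (Suc m)"
      using Suc.prems(1) False by simp
    finally show ?thesis by simp
  qed
qed simp

lemma qpoly_eval_neq_0_if_leading_term_dominates:
  assumes "n \<ge> 2"
    and "qnorm (a 0) < qnorm q * qnorm (a 1)"
    and "\<And>k. 1 \<le> k \<Longrightarrow> Suc k < n \<Longrightarrow> 2 * qnorm (a k) < qnorm q * qnorm (a (Suc k))"
    and "2 * qnorm (a (n - 1)) < qnorm q"
  shows "qpoly_eval n a q \<noteq> 0"
proof
  assume "qpoly_eval n a q = 0"
  then have bound: "qnorm q ^ n \<le> (\<Sum>k<n. qnorm q ^ k * qnorm (a k))"
    by (rule qnorm_power_le_of_qpoly_eval_eq_0)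
  define r where "r = qnorm q"
  have "r > 0"
    using assms(4) qnorm_nonneg [of "a (n - 1)"] unfolding r_def by linarith
  define c where "c k = (if k < n then r ^ k * qnorm (a k) else r ^ n)" for k
  have "c 0 < c 1"
    using assms(1,2) by (simp add: c_def r_def mult.commute)
  moreover have "2 * c k < c (Suc k)" if "1 \<le> k" "k < n" for k
  proof (cases "Suc k = n")
    case True
    then have "2 * qnorm (a k) < r"
      using assms(4) unfolding r_def by (metis diff_Suc_1)
    then have "r ^ k * (2 * qnorm (a k)) < r ^ k * r"
      using \<open>r > 0\<close> by simp
    then show ?thesis
      using True by (auto simp: c_def algebra_simps)
  next
    case False
    then have "2 * qnorm (a k) < r * qnorm (a (Suc k))"
      using assms(3) that unfolding r_def by simp
    then have "r ^ k * (2 * qnorm (a k)) < r ^ k * (r * qnorm (a (Suc k)))"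
      using \<open>r > 0\<close> by simp
    then show ?thesis
      using that False by (simp add: c_def algebra_simps)
  qed
  ultimately have "sum c {..<n} < c n"
    using assms(1) by (intro sum_lessThan_less_of_doubling) auto
  then show False
    using bound by (simp add: c_def r_def)
qed

theorem corollary1:
  fixes n :: nat and a :: "nat \<Rightarrow> quat" and q :: quat
  assumes "n \<ge> 2"
    and "\<forall>k\<in>{1..n-1}. a k \<noteq> 0"
    and "qpoly_eval n a q = 0"
  shows "qnorm q \<le> Max ({qnorm (a 0) / qnorm (a 1), 2 * qnorm (a (n-1))}
            \<union> {2 * (qnorm (a k) / qnorm (a (k+1))) | k. 1 \<le> k \<and> k \<le> n - 2})"
    (is "_ \<le> Max ?S")
proof (rule ccontr)
  assume "\<not> qnorm q \<le> Max ?S"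
  moreover have "finite ?S"
    by (rule finite_UnI) (auto intro: finite_subset [of _ "(\<lambda>k. 2 * (qnorm (a k) / qnorm (a (k+1)))) ` {1..n-2}"])
  ultimately have below: "x < qnorm q" if "x \<in> ?S" for x
    using Max_ge [of ?S x] that by linarith
  have a_pos: "qnorm (a k) > 0" if "1 \<le> k" "k < n" for k
    using assms(2) that by (simp add: qnorm_pos_iff)
  have "qpoly_eval n a q \<noteq> 0"
  proof (rule qpoly_eval_neq_0_if_leading_term_dominates)
    show "qnorm (a 0) < qnorm q * qnorm (a 1)"
      using below [of "qnorm (a 0) / qnorm (a 1)"] a_pos [of 1] assms(1)
      by (simp add: divide_less_eq mult.commute)
    show "2 * qnorm (a k) < qnorm q * qnorm (a (Suc k))" if "1 \<le> k" "Suc k < n" for k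
    proof -
      have "2 * (qnorm (a k) / qnorm (a (Suc k))) < qnorm q"
        using that by (intro below) auto
      then show ?thesis
        using a_pos [of "Suc k"] that by (simp add: divide_less_eq)
    qed
    show "2 * qnorm (a (n - 1)) < qnorm q"
      by (rule below) simp
  qed fact
  then show False
    using assms(3) by simp
qed

end
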